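(* There exist universal positive constants $K_1,K_2$ such that for all integers $N,P\ge 2$, with $x=\frac{\log N}{N}+\frac{\log P}{P}$, $$\frac{\mathrm{Vol}(\mathscr B)}{\mathrm{Vol}(\mathscr B_0)}\le K_1\sqrt{x}+K_2\,x^{3/2}.$$
   Context: $\log$ is base 2. For a probability vector $(z_1,\ldots,z_I)$, $H(z_1,\ldots,z_I)=\sum_i z_i\log(1/z_i)$. Let $\mathscr B_0\subset[0,1]^3$ be the set of points $(\overline a,f_0,f_1)$ with $0<\overline a,f_0,f_1<1$ and $f_0+f_1<1$ (so $\mathrm{Vol}(\mathscr B_0)=1/2$). Given $N,P$, let $\mathscr B\subset\mathscr B_0$ be the set of points $(\overline a,f_0,f_1)\in\mathscr B_0$ with $$H(\overline a,1-\overline a)-H(f_0,f_1,1-f_0-f_1)+(f_0+f_1)\in\left(-x,\,x\right],\qquad x=\frac{\log N}{N}+\frac{\log P}{P}.$$ $\mathrm{Vol}$ denotes Lebesgue measure in $\mathbb R^3$. *)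

theory Defs
  imports "HOL-Analysis.Analysis"
begin

definition ent :: "real \<Rightarrow> real" where
  "ent z = z * log 2 (1 / z)"

definition H2 :: "real \<Rightarrow> real" where
  "H2 a = ent a + ent (1 - a)"

definition H3 :: "real \<Rightarrow> real \<Rightarrow> real" where
  "H3 f0 f1 = ent f0 + ent f1 + ent (1 - f0 - f1)"

definition B0 :: "(real \<times> real \<times> real) set" where
  "B0 = {(a, f0, f1). 0 < a \<and> a < 1 \<and> 0 < f0 \<and> f0 < 1 \<and> 0 < f1 \<and> f1 < 1 \<and> f0 + f1 < 1}"

definition xpar :: "nat \<Rightarrow> nat \<Rightarrow> real" where
  "xpar N P = log 2 (real N) / real N + log 2 (real P) / real P"

definition Bset :: "nat \<Rightarrow> nat \<Rightarrow> (real \<times> real \<times> real) set" where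
  "Bset N P = {(a, f0, f1) \<in> B0.
     - xpar N P < H2 a - H3 f0 f1 + (f0 + f1) \<and> H2 a - H3 f0 f1 + (f0 + f1) \<le> xpar N P}"

end

theory Submission
  imports Defs
begin

text \<open>
  For fixed \<open>(f\<^sub>0, f\<^sub>1)\<close> the defining inequalities of \<open>\<B>\<close> confine \<open>H(a, 1 - a)\<close> to an
  interval of length \<open>2x\<close>. Since \<open>H(b, 1 - b) - H(a, 1 - a) \<ge> (b - a)\<^sup>2\<close> for
  \<open>0 < a \<le> b \<le> 1/2\<close> and the binary entropy is symmetric about \<open>1/2\<close>, such an \<open>a\<close>-slice
  lies in two intervals of length \<open>2 sqrt (2x)\<close>. By Fubini \<open>Vol(\<B>) \<le> 4 sqrt (2x)\<close>, while
  \<open>Vol(\<B>\<^sub>0) \<ge> 1/4\<close>.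
\<close>

lemma ent_has_real_derivative:
  assumes "0 < z"
  shows "(ent has_real_derivative - (ln z + 1) / ln 2) (at z)"
proof -
  have near: "\<forall>\<^sub>F w in nhds z. - (w * ln w) / ln 2 = ent w"
    using eventually_nhds_in_open[of "{0<..}" z] assms
    by (auto elim!: eventually_mono simp: ent_def log_def ln_div)
  have "((\<lambda>w. - (w * ln w) / ln 2) has_real_derivative - (ln z + 1) / ln 2) (at z)"
    using assms by (auto intro!: derivative_eq_intros simp: field_simps)
  then show ?thesis
    using DERIV_cong_ev[OF refl near refl] by simp
qed

lemma H2_has_real_derivative:
  assumes "0 < t" "t < 1"
  shows "(H2 has_real_derivative (ln (1 - t) - ln t) / ln 2) (at t)"
proof -
  have "((\<lambda>t. ent (1 - t)) has_real_derivative - (ln (1 - t) + 1) / ln 2 * - 1) (at t)"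
    using assms by (intro DERIV_chain2[OF ent_has_real_derivative] derivative_eq_intros) auto
  then have "((\<lambda>t. ent t + ent (1 - t)) has_real_derivative
          - (ln t + 1) / ln 2 + - (ln (1 - t) + 1) / ln 2 * - 1) (at t)"
    using assms by (intro DERIV_add ent_has_real_derivative)
  moreover have "- (ln t + 1) / ln 2 + - (ln (1 - t) + 1) / ln 2 * - 1 = (ln (1 - t) - ln t) / ln 2"
    by (simp add: field_simps)
  ultimately show ?thesis
    unfolding H2_def[abs_def] by simp
qed

lemma H2_derivative_ge:
  fixes t :: real
  assumes "0 < t" "t \<le> 1/2"
  shows "1 - 2 * t \<le> (ln (1 - t) - ln t) / ln 2"
proof -
  have "1 - 2 * t \<le> 1 - t / (1 - t)"
    using assms by (simp add: field_simps)
  also have "\<dots> \<le> ln (1 - t) - ln t"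
    using ln_le_minus_one[of "t / (1 - t)"] assms by (simp add: ln_div)
  finally have "1 - 2 * t \<le> ln (1 - t) - ln t" .
  moreover have "ln (1 - t) - ln t \<le> (ln (1 - t) - ln t) / ln 2"
    using calculation assms ln_2_less_1 by (simp add: le_divide_eq mult_left_le)
  ultimately show ?thesis
    by linarith
qed

lemma H2_increment_ge_square:
  assumes "0 < a" "a \<le> b" "b \<le> 1/2"
  shows "(b - a)\<^sup>2 \<le> H2 b - H2 a"
proof -
  define \<phi> where "\<phi> t = H2 t + (b - t)\<^sup>2" for t
  have "\<phi> a \<le> \<phi> b"
  proof (rule DERIV_nonneg_imp_nondecreasing[OF \<open>a \<le> b\<close>])
    fix t assume "a \<le> t" "t \<le> b"
    then have t: "0 < t" "t \<le> 1/2" using assms by auto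
    have "(\<phi> has_real_derivative (ln (1 - t) - ln t) / ln 2 - 2 * (b - t)) (at t)"
      unfolding \<phi>_def[abs_def] using t
      by (auto intro!: derivative_eq_intros H2_has_real_derivative)
    moreover have "2 * (b - t) \<le> (ln (1 - t) - ln t) / ln 2"
      using H2_derivative_ge[OF t] \<open>b \<le> 1/2\<close> by (simp add: algebra_simps)
    ultimately show "\<exists>y. (\<phi> has_real_derivative y) (at t) \<and> 0 \<le> y"
      by (intro exI conjI) auto
  qed
  then show ?thesis
    unfolding \<phi>_def by simp
qed

lemma H2_one_minus: "H2 (1 - a) = H2 a"
  unfolding H2_def by simp

lemma H2_min_one_minus: "H2 (min a (1 - a)) = H2 a"
  by (simp add: min_def H2_one_minus)

lemma abs_min_one_minus_diff_le_sqrt_H2: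
  assumes "0 < a" "a < 1" "0 < b" "b < 1"
  shows "\<bar>min a (1 - a) - min b (1 - b)\<bar> \<le> sqrt \<bar>H2 a - H2 b\<bar>"
proof -
  define u v where "u = min a (1 - a)" and "v = min b (1 - b)"
  have uv: "0 < u" "u \<le> 1/2" "0 < v" "v \<le> 1/2"
    using assms unfolding u_def v_def min_def by auto
  have "(u - v)\<^sup>2 \<le> \<bar>H2 u - H2 v\<bar>"
    using H2_increment_ge_square[of u v] H2_increment_ge_square[of v u] uv
    by (cases "u \<le> v") (auto simp: power2_commute)
  then have "sqrt ((u - v)\<^sup>2) \<le> sqrt \<bar>H2 u - H2 v\<bar>"
    by (rule real_sqrt_le_mono)
  then show ?thesis
    unfolding u_def v_def H2_min_one_minus by simp
qed

text \<open>Up to the symmetry \<open>a \<mapsto> 1 - a\<close>, the points of such a set lie within \<open>sqrt d\<close> of each other.\<close>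

lemma emeasure_le_of_H2_oscillation:
  assumes "A \<subseteq> {0<..<1}" "\<And>a b. a \<in> A \<Longrightarrow> b \<in> A \<Longrightarrow> \<bar>H2 a - H2 b\<bar> \<le> d"
  shows "emeasure lborel A \<le> ennreal (4 * sqrt d)"
proof (cases "A = {}")
  case False
  then obtain a0 where "a0 \<in> A" by blast
  define r m where "r = sqrt d" and "m = min a0 (1 - a0)"
  have "0 \<le> r"
    using assms(2)[OF \<open>a0 \<in> A\<close> \<open>a0 \<in> A\<close>] unfolding r_def m_def by simp
  have "A \<subseteq> {m - r..m + r} \<union> {1 - m - r..1 - m + r}"
  proof
    fix a assume "a \<in> A"
    have "\<bar>min a (1 - a) - m\<bar> \<le> sqrt \<bar>H2 a - H2 a0\<bar>"
      unfolding m_def using assms(1) \<open>a \<in> A\<close> \<open>a0 \<in> A\<close>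
      by (intro abs_min_one_minus_diff_le_sqrt_H2) auto
    also have "\<dots> \<le> r"
      unfolding r_def using assms(2) \<open>a \<in> A\<close> \<open>a0 \<in> A\<close> by (simp add: real_sqrt_le_mono)
    finally show "a \<in> {m - r..m + r} \<union> {1 - m - r..1 - m + r}"
      by (auto simp: min_def split: if_splits)
  qed
  then have "emeasure lborel A \<le> emeasure lborel ({m - r..m + r} \<union> {1 - m - r..1 - m + r})"
    by (intro emeasure_mono) auto
  also have "\<dots> \<le> emeasure lborel {m - r..m + r} + emeasure lborel {1 - m - r..1 - m + r}"
    by (intro emeasure_subadditive) auto
  also have "\<dots> = ennreal (4 * r)"
    using \<open>0 \<le> r\<close> by (simp flip: ennreal_plus)
  finally show ?thesis
    unfolding r_def m_def .
qed simp

lemma emeasure_lborel_le_by_slices: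
  fixes A :: "('a::euclidean_space \<times> 'b::euclidean_space) set"
  assumes "A \<in> sets borel" "S \<in> sets borel"
    and "\<And>y. y \<notin> S \<Longrightarrow> (\<lambda>x. (x, y)) -` A = {}"
    and "\<And>y. y \<in> S \<Longrightarrow> emeasure lborel ((\<lambda>x. (x, y)) -` A) \<le> c"
  shows "emeasure lborel A \<le> c * emeasure lborel S"
proof -
  have "A \<in> sets (lborel \<Otimes>\<^sub>M lborel)"
    using assms(1) by (simp only: lborel_prod sets_lborel)
  then have "emeasure lborel A = (\<integral>\<^sup>+ y. emeasure lborel ((\<lambda>x. (x, y)) -` A) \<partial>lborel)"
    using lborel_pair.emeasure_pair_measure_alt2 by (simp add: lborel_prod)
  also have "\<dots> \<le> (\<integral>\<^sup>+ y. c * indicator S y \<partial>lborel)"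
    using assms(3,4) by (intro nn_integral_mono) (auto split: split_indicator)
  also have "\<dots> = c * emeasure lborel S"
    using assms(2) by (simp add: nn_integral_cmult_indicator)
  finally show ?thesis .
qed

lemma emeasure_lborel_Times:
  fixes A :: "'a::euclidean_space set" and B :: "'b::euclidean_space set"
  assumes "A \<in> sets borel" "B \<in> sets borel"
  shows "emeasure lborel (A \<times> B) = emeasure lborel A * emeasure lborel B"
  by (subst lborel_prod[symmetric], rule lborel.emeasure_pair_measure_Times) (use assms in auto)

lemma measurable_fst_borel[measurable]:
  "fst \<in> (borel :: ('a::second_countable_topology \<times> 'b::second_countable_topology) measure) \<rightarrow>\<^sub>M borel"
  by (intro borel_measurable_continuous_onI continuous_on_fst continuous_on_id)

lemma measurable_snd_borel[measurable]:
  "snd \<in> (borel :: ('a::second_countable_topology \<times> 'b::second_countable_topology) measure) \<rightarrow>\<^sub>M borel"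
  by (intro borel_measurable_continuous_onI continuous_on_snd continuous_on_id)

lemma ent_measurable[measurable]: "ent \<in> borel_measurable borel"
  unfolding ent_def by measurable

lemma B0_measurable: "B0 \<in> sets borel"
  unfolding B0_def case_prod_unfold by measurable

lemma Bset_measurable: "Bset N P \<in> sets borel"
  unfolding Bset_def B0_def H2_def H3_def case_prod_unfold by measurable

lemma xpar_nonneg: "0 \<le> xpar N P"
  unfolding xpar_def by (cases "N = 0"; cases "P = 0") auto

lemma emeasure_Bset_le: "emeasure lborel (Bset N P) \<le> ennreal (4 * sqrt (2 * xpar N P))"
proof -
  let ?S = "{0<..<1::real} \<times> {0<..<1::real}"
  have "emeasure lborel (Bset N P) \<le> ennreal (4 * sqrt (2 * xpar N P)) * emeasure lborel ?S"
  proof (rule emeasure_lborel_le_by_slices[OF Bset_measurable])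
    fix y assume "y \<in> ?S"
    show "emeasure lborel ((\<lambda>a. (a, y)) -` Bset N P) \<le> ennreal (4 * sqrt (2 * xpar N P))"
      by (rule emeasure_le_of_H2_oscillation) (auto simp: Bset_def B0_def case_prod_unfold)
  qed (auto simp: Bset_def B0_def intro!: borel_open open_Times)
  also have "emeasure lborel ?S = 1"
    by (simp add: emeasure_lborel_Times)
  finally show ?thesis by simp
qed

lemma measure_B0_ge: "1/4 \<le> measure lborel B0"
proof -
  let ?inner = "{0<..<1::real} \<times> {0<..<1/2::real} \<times> {0<..<1/2::real}"
  let ?outer = "{0<..<1::real} \<times> {0<..<1::real} \<times> {0<..<1::real}"
  have "emeasure lborel ({0<..<1/2::real} \<times> {0<..<1/2::real}) = ennreal (1/4)"
    by (simp add: emeasure_lborel_Times ennreal_mult[symmetric] del: ennreal_half)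
  then have "emeasure lborel ?inner = ennreal (1/4)"
    by (simp add: emeasure_lborel_Times borel_open open_Times)
  moreover have "?inner \<subseteq> B0"
    unfolding B0_def by auto
  ultimately have lower: "ennreal (1/4) \<le> emeasure lborel B0"
    using emeasure_mono[of ?inner B0 lborel] B0_measurable by simp
  have "emeasure lborel ?outer = 1"
    by (simp add: emeasure_lborel_Times borel_open open_Times)
  moreover have "B0 \<subseteq> ?outer"
    unfolding B0_def by auto
  moreover have "?outer \<in> sets borel"
    by (intro borel_open open_Times open_greaterThanLessThan)
  ultimately have "emeasure lborel B0 < top"
    using emeasure_mono[of B0 ?outer lborel] ennreal_one_less_top by (simp add: le_less_trans)
  from enn2real_mono[OF lower this] show ?thesis
    by (simp add: measure_def)
qed

lemma measure_Bset_div_measure_B0_le: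
  "measure lborel (Bset N P) / measure lborel B0 \<le> 16 * sqrt (2 * xpar N P)"
proof -
  have "0 \<le> xpar N P"
    by (rule xpar_nonneg)
  then have "measure lborel (Bset N P) \<le> 4 * sqrt (2 * xpar N P)"
    using emeasure_Bset_le[of N P] unfolding measure_def by (intro enn2real_leI) auto
  then have "measure lborel (Bset N P) / measure lborel B0 \<le> 4 * sqrt (2 * xpar N P) / (1/4)"
    using measure_B0_ge \<open>0 \<le> xpar N P\<close> by (intro frac_le) auto
  then show ?thesis
    by simp
qed

theorem mainTheorem6:
  shows "\<exists>K1 K2 :: real. K1 > 0 \<and> K2 > 0 \<and>
    (\<forall>N P :: nat. N \<ge> 2 \<longrightarrow> P \<ge> 2 \<longrightarrow>
       measure lborel (Bset N P) / measure lborel B0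
         \<le> K1 * sqrt (xpar N P) + K2 * xpar N P powr (3/2))"
proof -
  have "measure lborel (Bset N P) / measure lborel B0
      \<le> 16 * sqrt 2 * sqrt (xpar N P) + 1 * xpar N P powr (3/2)" for N P
    using measure_Bset_div_measure_B0_le[of N P] by (simp add: real_sqrt_mult add_increasing2)
  then show ?thesis
    by (intro exI[of _ "16 * sqrt 2"] exI[of _ 1]) auto
qed

end
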